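(* Let $p \ge 2$, $k = 2^{p-1}$ and let $M$ be the model matrix of the main effect model of the $2^{p-1}$ fractional factorial design of resolution $p$ (defined in the context). For every degree $2$ fiber $F$ with more than one element, choose a set $\mathcal{B}_F$ of $|F|-1$ moves, each of the form $\mathbf{x}-\mathbf{y}$ with $\mathbf{x},\mathbf{y}\in F$, such that the graph on $F$ with edges $\{\mathbf{x},\mathbf{y}\}$ for $\mathbf{x}-\mathbf{y}\in\mathcal{B}_F$ is connected. Then $\mathcal{B} = \bigcup_F \mathcal{B}_F$ is a minimal Markov basis for $M'$; that is, a minimal Markov basis for $M'$ is constructed as the set of moves connecting all degree $2$ fibers with more than one element.
   Context: Cells are indexed by $\mathbf{i} = (i_1,\ldots,i_{p-1}) \in \{0,1\}^{p-1}$; vectors in $\mathbb{Z}^k$ are indexed by cells. The design: in run $\mathbf{i}$, factor $m$ ($1\le m\le p-1$) is at level $(-1)^{i_m}$ and factor $p$ at level $(-1)^{i_1+\cdots+i_{p-1}}$ (defining relation: product of all $p$ factors is the identity). $M$ is the $k\times(p+1)$ matrix whose row for run $\mathbf{i}$ is $\big(1,(-1)^{i_1},\ldots,(-1)^{i_{p-1}},(-1)^{i_1+\cdots+i_{p-1}}\big)$. A move is $\mathbf{z}\in\mathbb{Z}^k$ with $M'\mathbf{z}=\mathbf{0}$. For $\mathbf{b}\in\mathbb{N}^k$ the fiber is $\mathcal{F}(M'\mathbf{b})=\{\mathbf{y}\in\mathbb{N}^k : M'\mathbf{y}=M'\mathbf{b}\}$; it is a degree $2$ fiber if $\sum_{\mathbf{i}}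 b(\mathbf{i}) = 2$. For a set $\mathcal{B}$ of moves, $G(\mathbf{b},\mathcal{B})$ is the graph on $\mathcal{F}(M'\mathbf{b})$ joining $\mathbf{x},\mathbf{y}$ when $\pm(\mathbf{y}-\mathbf{x})\in\mathcal{B}$. A finite set $\mathcal{B}$ of moves is a Markov basis for $M'$ if $G(\mathbf{b},\mathcal{B})$ is connected for every $\mathbf{b}\in\mathbb{N}^k$, and minimal if no proper subset is a Markov basis. *)

theory Defs
  imports Main
begin

text \<open>Cells: 0/1 lists of length p-1 (entry m-1 of the list is i_m).
  Vectors in Z^k: functions from cells to int, zero outside the cells.\<close>

definition cells :: "nat \<Rightarrow> nat list set" where
  "cells p = {i. length i = p - 1 \<and> set i \<subseteq> {0, 1}}"

definition Mentry :: "nat \<Rightarrow> nat list \<Rightarrow> nat \<Rightarrow> int" where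
  "Mentry p i j =
     (if j = 0 then 1
      else if j < p then (-1) ^ (i ! (j - 1))
      else (-1) ^ (sum_list i))"

definition Mt :: "nat \<Rightarrow> (nat list \<Rightarrow> int) \<Rightarrow> nat \<Rightarrow> int" where
  "Mt p z j = (\<Sum>i\<in>cells p. Mentry p i j * z i)"

definition vec :: "nat \<Rightarrow> (nat list \<Rightarrow> int) \<Rightarrow> bool" where
  "vec p z \<longleftrightarrow> (\<forall>i. i \<notin> cells p \<longrightarrow> z i = 0)"

definition nonneg_vec :: "nat \<Rightarrow> (nat list \<Rightarrow> int) \<Rightarrow> bool" where
  "nonneg_vec p b \<longleftrightarrow> vec p b \<and> (\<forall>i. b i \<ge> 0)"

definition is_move :: "nat \<Rightarrow> (nat list \<Rightarrow> int) \<Rightarrow> bool" where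
  "is_move p z \<longleftrightarrow> vec p z \<and> (\<forall>j\<le>p. Mt p z j = 0)"

definition fiber :: "nat \<Rightarrow> (nat list \<Rightarrow> int) \<Rightarrow> (nat list \<Rightarrow> int) set" where
  "fiber p b = {y. nonneg_vec p y \<and> (\<forall>j\<le>p. Mt p y j = Mt p b j)}"

definition graph_connected ::
  "(nat list \<Rightarrow> int) set \<Rightarrow> (nat list \<Rightarrow> int) set \<Rightarrow> bool" where
  "graph_connected F B \<longleftrightarrow>
     (\<forall>x\<in>F. \<forall>y\<in>F. (x, y) \<in>
        {(u, v). u \<in> F \<and> v \<in> F \<and> (v - u \<in> B \<or> u - v \<in> B)}\<^sup>*)"

definition markov_basis :: "nat \<Rightarrow> (nat list \<Rightarrow> int) set \<Rightarrow> bool" where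
  "markov_basis p B \<longleftrightarrow> finite B \<and> (\<forall>z\<in>B. is_move p z) \<and>
     (\<forall>b. nonneg_vec p b \<longrightarrow> graph_connected (fiber p b) B)"

definition minimal_markov_basis :: "nat \<Rightarrow> (nat list \<Rightarrow> int) set \<Rightarrow> bool" where
  "minimal_markov_basis p B \<longleftrightarrow> markov_basis p B \<and>
     (\<forall>B'. B' \<subset> B \<longrightarrow> \<not> markov_basis p B')"

definition deg2_fibers :: "nat \<Rightarrow> (nat list \<Rightarrow> int) set set" where
  "deg2_fibers p = {fiber p b | b. nonneg_vec p b \<and> (\<Sum>i\<in>cells p. b i) = 2}"

end

theory Submission
  imports Defs "HOL-Library.Multiset" "HOL-Library.Function_Algebras"
begin

text \<open>A run is determined by the levels of its factors, a 0/1 vector of even weight indexed by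
  \<open>{1..p}\<close>, and \<open>M'\<close> records the number of runs of a contingency table and how many of them have
  each factor at level \<open>-1\<close>. Write two tables of a fiber as lists of runs. If two runs differ in
  factors \<open>j\<close> and \<open>k\<close>, switching these two levels in both runs stays in the degree 2 fiber of the
  pair, hence follows a path of the graph of \<open>B_F\<close>; a counting argument on the mismatches with the
  target list, using that each run differs from its partner in an even number of factors, always
  finds such a switch that lowers the total Hamming distance. So \<open>B\<close> is a Markov basis.
  Two distinct elements of a degree 2 fiber have disjoint supports, since removing a common run
  leaves two single runs with the same row of \<open>M\<close>. Hence a move \<open>x - y\<close> of \<open>B\<close> determines \<open>x\<close> and
  \<open>y\<close>, so without one move of \<open>B_F\<close> at most \<open>|F| - 2\<close> edges remain on \<open>F\<close>, too few to connect it.\<close>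

definition cell_vec :: "nat list \<Rightarrow> nat list \<Rightarrow> int" where
  "cell_vec a = (\<lambda>c. if c = a then 1 else 0)"

definition count_vec :: "nat list multiset \<Rightarrow> nat list \<Rightarrow> int" where
  "count_vec M = (\<lambda>c. int (count M c))"

lemma finite_cells: "finite (cells p)"
proof -
  have "cells p = {xs. set xs \<subseteq> {0, 1} \<and> length xs = p - 1}"
    unfolding cells_def by auto
  then show ?thesis
    using finite_lists_length_eq[of "{0, 1 :: nat}"] by simp
qed

lemma Mt_add: "Mt p (f + g) j = Mt p f j + Mt p g j"
  unfolding Mt_def by (simp add: distrib_left sum.distrib)

lemma Mt_diff: "Mt p (f - g) j = Mt p f j - Mt p g j"
  unfolding Mt_def by (simp add: right_diff_distrib sum_subtractf)

lemma Mt_0: "Mt p f 0 = (\<Sum>c\<in>cells p. f c)"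
  unfolding Mt_def by (simp add: Mentry_def)

lemma Mt_cell_vec: "a \<in> cells p \<Longrightarrow> Mt p (cell_vec a) j = Mentry p a j"
  unfolding Mt_def cell_vec_def using finite_cells[of p]
  by (simp add: if_distrib cong: if_cong)

lemma count_vec_add_mset: "count_vec (add_mset a M) = count_vec M + cell_vec a"
  unfolding count_vec_def cell_vec_def by auto

lemma count_vec_union: "count_vec (M + N) = count_vec M + count_vec N"
  unfolding count_vec_def by auto

lemma Mt_count_vec:
  "set_mset M \<subseteq> cells p \<Longrightarrow> Mt p (count_vec M) j = (\<Sum>a\<in>#M. Mentry p a j)"
proof (induction M)
  case empty
  then show ?case by (simp add: count_vec_def Mt_def)
next
  case (add a M)
  have "Mt p (count_vec (add_mset a M)) j = Mt p (count_vec M) j + Mt p (cell_vec a) j"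
    by (simp only: count_vec_add_mset Mt_add)
  with add show ?case
    by (simp add: Mt_cell_vec add.commute)
qed

lemma Mt_count_vec_0: "set_mset M \<subseteq> cells p \<Longrightarrow> Mt p (count_vec M) 0 = int (size M)"
  by (simp add: Mt_count_vec Mentry_def)

lemma Mt_count_vec_mset:
  "set xs \<subseteq> cells p \<Longrightarrow> Mt p (count_vec (mset xs)) j = (\<Sum>t<length xs. Mentry p (xs ! t) j)"
  by (simp add: Mt_count_vec sum_mset_sum_list sum_list_sum_nth atLeast0LessThan flip: mset_map)

lemma nonneg_vec_count_vec: "set_mset M \<subseteq> cells p \<Longrightarrow> nonneg_vec p (count_vec M)"
  unfolding nonneg_vec_def vec_def count_vec_def
  by (auto simp: not_in_iff[symmetric])

lemma nonneg_vec_obtains_count_vec: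
  assumes "nonneg_vec p x"
  obtains M where "set_mset M \<subseteq> cells p" "x = count_vec M"
proof
  define M where "M = (\<Sum>c\<in>cells p. replicate_mset (nat (x c)) c)"
  have count_M: "count M c = (if c \<in> cells p then nat (x c) else 0)" for c
    unfolding M_def count_sum using finite_cells[of p]
    by (simp add: count_replicate_mset if_distrib cong: if_cong)
  show "set_mset M \<subseteq> cells p"
  proof
    fix c assume "c \<in># M"
    then have "count M c > 0" by simp
    then show "c \<in> cells p" using count_M[of c] by (auto split: if_splits)
  qed
  show "x = count_vec M"
  proof
    fix c show "x c = count_vec M c"
      using assms count_M[of c] unfolding count_vec_def nonneg_vec_def vec_def by auto
  qed
qed

lemma nonneg_vec_add: "nonneg_vec p f \<Longrightarrow> nonneg_vec p g \<Longrightarrow> nonneg_vec p (f + g)"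
  unfolding nonneg_vec_def vec_def by auto

section \<open>Levels of the factors in a run\<close>

text \<open>Run \<open>r\<close> sets factor \<open>j\<close> (\<open>1 \<le> j \<le> p\<close>) to the level \<open>(-1) ^ level_bit p r j\<close>.\<close>

definition level_bit :: "nat \<Rightarrow> nat list \<Rightarrow> nat \<Rightarrow> nat" where
  "level_bit p r j = (if j < p then r ! (j - 1) else sum_list r mod 2)"

lemma cellsD: "r \<in> cells p \<Longrightarrow> length r = p - 1 \<and> set r \<subseteq> {0, 1}"
  unfolding cells_def by auto

lemma nth_cell_le_1: "r \<in> cells p \<Longrightarrow> i < p - 1 \<Longrightarrow> r ! i \<le> 1"
  using cellsD[of r p] nth_mem[of i r] by fastforce

lemma level_bit_le_1: "r \<in> cells p \<Longrightarrow> 1 \<le> j \<Longrightarrow> level_bit p r j \<le> 1"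
  using nth_cell_le_1[of r p "j - 1"] unfolding level_bit_def by auto

lemma Mentry_eq_level_bit:
  assumes "r \<in> cells p" "1 \<le> j" "j \<le> p"
  shows "Mentry p r j = 1 - 2 * int (level_bit p r j)"
proof (cases "j < p")
  case True
  then have "r ! (j - 1) \<le> 1"
    using nth_cell_le_1[of r p "j - 1"] assms by auto
  then have "r ! (j - 1) = 0 \<or> r ! (j - 1) = 1"
    by auto
  then show ?thesis
    using True assms unfolding level_bit_def Mentry_def by auto
next
  case False
  have "(-1 :: int) ^ sum_list r = (if even (sum_list r) then 1 else -1)"
    by simp
  then show ?thesis
    using False assms unfolding level_bit_def Mentry_def
    by (auto simp: odd_iff_mod_2_eq_one even_iff_mod_2_eq_zero)
qed

lemma cell_eq_if_level_bits_eq: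
  assumes "r \<in> cells p" "s \<in> cells p" "\<And>j. j \<in> {1..p} \<Longrightarrow> level_bit p r j = level_bit p s j"
  shows "r = s"
proof (rule nth_equalityI)
  show "length r = length s"
    using cellsD[OF assms(1)] cellsD[OF assms(2)] by simp
  fix i assume "i < length r"
  then have "Suc i < p" using cellsD[OF assms(1)] by simp
  with assms(3)[of "Suc i"] show "r ! i = s ! i"
    unfolding level_bit_def by simp
qed

lemma cell_eq_if_Mentry_eq:
  assumes "r \<in> cells p" "s \<in> cells p" "\<And>j. j \<le> p \<Longrightarrow> Mentry p r j = Mentry p s j"
  shows "r = s"
proof (rule cell_eq_if_level_bits_eq[OF assms(1,2)])
  fix j assume "j \<in> {1..p}"
  then have "1 - 2 * int (level_bit p r j) = 1 - 2 * int (level_bit p s j)"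
    using assms by (simp add: Mentry_eq_level_bit[symmetric])
  then show "level_bit p r j = level_bit p s j" by simp
qed

text \<open>The defining relation: the product of all \<open>p\<close> factors is the identity.\<close>

lemma even_sum_level_bits:
  assumes "r \<in> cells p"
  shows "even (\<Sum>j\<in>{1..p}. level_bit p r j)"
proof (cases "p = 0")
  case False
  have split: "{1..p} = insert p {1..p - 1}"
    using False by auto
  have shift: "{1..p - 1} = Suc ` {..<p - 1}"
    by (simp add: image_Suc_lessThan)
  have "(\<Sum>j\<in>{1..p}. level_bit p r j) = level_bit p r p + (\<Sum>j\<in>Suc ` {..<p - 1}. level_bit p r j)"
    unfolding split shift[symmetric] using False by simp
  also have "(\<Sum>j\<in>Suc ` {..<p - 1}. level_bit p r j) = (\<Sum>i<p - 1. level_bit p r (Suc i))"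
    by (simp add: sum.reindex)
  also have "(\<Sum>i<p - 1. level_bit p r (Suc i)) = (\<Sum>i<p - 1. r ! i)"
    by (rule sum.cong) (auto simp: level_bit_def)
  also have "\<dots> = sum_list r"
    using cellsD[OF assms] by (simp add: sum_list_sum_nth atLeast0LessThan)
  finally show ?thesis
    by (simp add: level_bit_def)
qed simp

section \<open>Switching the levels of two factors\<close>

text \<open>Toggling factor \<open>j < p\<close> changes list entry \<open>j - 1\<close>, and with it the parity, i.e.\ the level of
  factor \<open>p\<close>; toggling factor \<open>p\<close> itself leaves the list unchanged.\<close>

definition toggle_level :: "nat \<Rightarrow> nat list \<Rightarrow> nat \<Rightarrow> nat list" where
  "toggle_level p r j = (if j < p then r[j - 1 := 1 - r ! (j - 1)] else r)"

definition switch_levels :: "nat \<Rightarrow> nat list \<Rightarrow> nat \<Rightarrow> nat \<Rightarrow> nat list" where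
  "switch_levels p r j k = toggle_level p (toggle_level p r j) k"

lemma toggle_level_in_cells:
  assumes "r \<in> cells p" "1 \<le> j"
  shows "toggle_level p r j \<in> cells p"
proof (cases "j < p")
  case True
  have "set (r[j - 1 := 1 - r ! (j - 1)]) \<subseteq> insert (1 - r ! (j - 1)) (set r)"
    by (rule set_update_subset_insert)
  moreover have "1 - r ! (j - 1) \<in> {0, 1 :: nat}"
    by auto
  ultimately show ?thesis
    using True cellsD[OF assms(1)] unfolding toggle_level_def cells_def by auto
qed (use assms in \<open>auto simp: toggle_level_def\<close>)

lemma switch_levels_in_cells:
  "r \<in> cells p \<Longrightarrow> 1 \<le> j \<Longrightarrow> 1 \<le> k \<Longrightarrow> switch_levels p r j k \<in> cells p"
  unfolding switch_levels_def by (blast intro: toggle_level_in_cells)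

lemma mod_2_toggle:
  assumes "(a :: nat) \<le> 1" "a \<le> s"
  shows "(s + (1 - a) - a) mod 2 = 1 - s mod 2"
proof -
  consider "a = 0" | "a = 1" "s \<noteq> 0"
    using assms by linarith
  then show ?thesis
  proof cases
    case 2
    then obtain t where "s = Suc t" by (cases s) auto
    with 2 show ?thesis by (simp add: mod_Suc)
  qed (simp add: mod_Suc)
qed

lemma level_bit_toggle_level:
  assumes "r \<in> cells p" "1 \<le> j" "1 \<le> l" "l \<le> p"
  shows "level_bit p (toggle_level p r j) l =
    (if j < p \<and> (l = j \<or> l = p) then 1 - level_bit p r l else level_bit p r l)"
proof (cases "j < p")
  case True
  have j: "j - 1 < length r"
    using cellsD[OF assms(1)] assms True by auto
  have "r ! (j - 1) \<le> 1"
    using level_bit_le_1[OF assms(1,2)] True by (simp add: level_bit_def)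
  moreover have "r ! (j - 1) \<le> sum_list r"
    using j by (metis elem_le_sum_list)
  moreover have "sum_list (r[j - 1 := 1 - r ! (j - 1)]) = sum_list r + (1 - r ! (j - 1)) - r ! (j - 1)"
    using j by (simp add: sum_list_update)
  ultimately show ?thesis
    using True j assms mod_2_toggle
    unfolding toggle_level_def level_bit_def by (auto simp: nth_list_update)
qed (simp add: toggle_level_def)

lemma level_bit_switch_levels:
  assumes "r \<in> cells p" "j \<in> {1..p}" "k \<in> {1..p}" "j \<noteq> k" "l \<in> {1..p}"
  shows "level_bit p (switch_levels p r j k) l =
    (if l = j \<or> l = k then 1 - level_bit p r l else level_bit p r l)"
proof -
  have "toggle_level p r j \<in> cells p" "level_bit p r l \<le> 1"
    using assms toggle_level_in_cells level_bit_le_1[of r p l] by auto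
  then show ?thesis
    using assms unfolding switch_levels_def
    by (auto simp: level_bit_toggle_level)
qed

lemma Mentry_switch_levels:
  assumes cells: "u \<in> cells p" "v \<in> cells p"
    and jk: "j \<in> {1..p}" "k \<in> {1..p}" "j \<noteq> k"
    and opposite: "level_bit p u j \<noteq> level_bit p v j" "level_bit p u k \<noteq> level_bit p v k"
    and "l \<le> p"
  shows "Mentry p u l + Mentry p v l =
    Mentry p (switch_levels p u j k) l + Mentry p (switch_levels p v j k) l"
proof (cases "l = 0")
  case False
  then have l: "l \<in> {1..p}" using \<open>l \<le> p\<close> by auto
  have "switch_levels p u j k \<in> cells p" "switch_levels p v j k \<in> cells p"
    using cells jk by (auto intro: switch_levels_in_cells)
  moreover have "level_bit p u l \<le> 1" "level_bit p v l \<le> 1"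
    using cells l level_bit_le_1 by auto
  ultimately show ?thesis
    using cells jk opposite l
    by (simp add: Mentry_eq_level_bit level_bit_switch_levels of_nat_diff) auto
qed (simp add: Mentry_def)

definition hamming :: "nat \<Rightarrow> nat list \<Rightarrow> nat list \<Rightarrow> nat" where
  "hamming p r s = card {l \<in> {1..p}. level_bit p r l \<noteq> level_bit p s l}"

lemma hamming_eq_sum: "hamming p r s = (\<Sum>l\<in>{1..p}. of_bool (level_bit p r l \<noteq> level_bit p s l))"
proof -
  have "{l \<in> {1..p}. level_bit p r l \<noteq> level_bit p s l} = {1..p} \<inter> {l. level_bit p r l \<noteq> level_bit p s l}"
    by blast
  then show ?thesis
    unfolding hamming_def by simp
qed

lemma hamming_sym: "hamming p r s = hamming p s r"
  unfolding hamming_def by (metis (mono_tags))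

lemma even_hamming:
  assumes "r \<in> cells p" "s \<in> cells p"
  shows "even (hamming p r s)"
proof -
  have bits: "level_bit p r l + level_bit p s l =
      of_bool (level_bit p r l \<noteq> level_bit p s l) + 2 * (level_bit p r l * level_bit p s l)"
    if "l \<in> {1..p}" for l
    using level_bit_le_1[OF assms(1), of l] level_bit_le_1[OF assms(2), of l] that
    by (cases "level_bit p r l"; cases "level_bit p s l") auto
  have "(\<Sum>l\<in>{1..p}. level_bit p r l) + (\<Sum>l\<in>{1..p}. level_bit p s l) =
      hamming p r s + 2 * (\<Sum>l\<in>{1..p}. level_bit p r l * level_bit p s l)"
  proof -
    have "(\<Sum>l\<in>{1..p}. level_bit p r l) + (\<Sum>l\<in>{1..p}. level_bit p s l) =
        (\<Sum>l\<in>{1..p}. of_bool (level_bit p r l \<noteq> level_bit p s l) + 2 * (level_bit p r l * level_bit p s l))"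
      by (simp add: bits flip: sum.distrib)
    then show ?thesis
      by (simp add: hamming_eq_sum sum.distrib sum_distrib_left)
  qed
  then show ?thesis
    using even_sum_level_bits[OF assms(1)] even_sum_level_bits[OF assms(2)]
    by (metis even_add even_mult_iff even_numeral)
qed

lemma sum_remove_two:
  assumes "finite A" "j \<in> A" "k \<in> A" "j \<noteq> k"
  shows "sum f A = f j + f k + sum f (A - {j, k})"
proof -
  have "sum f A = f j + sum f (A - {j})"
    using assms by (simp add: sum.remove)
  also have "sum f (A - {j}) = f k + sum f (A - {j} - {k})"
    using assms by (simp add: sum.remove)
  finally show ?thesis
    by (simp add: Diff_insert2[symmetric] add.assoc)
qed

text \<open>The switch undoes both mismatches in factor \<open>j\<close> and cannot increase the mismatches in factor \<open>k\<close>,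
  which flip from \<open>m\<close> to \<open>2 - m\<close> with \<open>m \<ge> 1\<close>.\<close>

lemma hamming_switch_levels_less:
  assumes cells: "u \<in> cells p" "v \<in> cells p" "a \<in> cells p" "b \<in> cells p"
    and jk: "j \<in> {1..p}" "k \<in> {1..p}" "j \<noteq> k"
    and j: "level_bit p u j \<noteq> level_bit p a j" "level_bit p v j \<noteq> level_bit p b j"
      "level_bit p u j \<noteq> level_bit p v j"
    and k: "level_bit p u k \<noteq> level_bit p v k"
      "\<not> (level_bit p u k = level_bit p a k \<and> level_bit p v k = level_bit p b k)"
  shows "hamming p (switch_levels p u j k) a + hamming p (switch_levels p v j k) b <
    hamming p u a + hamming p v b"
proof -
  define g where "g w t l = (of_bool (level_bit p w l \<noteq> level_bit p t l) :: nat)" for w t l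
  have split: "hamming p w t = g w t j + g w t k + (\<Sum>l\<in>{1..p} - {j, k}. g w t l)" for w t
    unfolding hamming_eq_sum g_def using jk by (simp add: sum_remove_two del: sum_of_bool_eq)
  have rest: "(\<Sum>l\<in>{1..p} - {j, k}. g (switch_levels p w j k) t l) = (\<Sum>l\<in>{1..p} - {j, k}. g w t l)"
    if "w \<in> cells p" for w t
    using that jk by (intro sum.cong) (auto simp: g_def level_bit_switch_levels simp del: sum_of_bool_eq)
  have bits: "level_bit p u j \<le> 1" "level_bit p v j \<le> 1" "level_bit p a j \<le> 1" "level_bit p b j \<le> 1"
    "level_bit p u k \<le> 1" "level_bit p v k \<le> 1" "level_bit p a k \<le> 1" "level_bit p b k \<le> 1"
    using cells jk level_bit_le_1 by auto
  have switched: "level_bit p (switch_levels p u j k) j = 1 - level_bit p u j"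
    "level_bit p (switch_levels p u j k) k = 1 - level_bit p u k"
    "level_bit p (switch_levels p v j k) j = 1 - level_bit p v j"
    "level_bit p (switch_levels p v j k) k = 1 - level_bit p v k"
    using cells jk level_bit_switch_levels by auto
  have "g (switch_levels p u j k) a j + g (switch_levels p u j k) a k
      + g (switch_levels p v j k) b j + g (switch_levels p v j k) b k
      < g u a j + g u a k + g v b j + g v b k"
    unfolding g_def switched using bits j k by auto
  then show ?thesis
    using rest[OF cells(1), of a] rest[OF cells(2), of b]
    by (simp only: split[of "switch_levels p u j k"] split[of "switch_levels p v j k"]
        split[of u] split[of v])
qed

lemma exists_opposite_mismatch:
  fixes X Y :: "nat \<Rightarrow> 'c \<Rightarrow> nat"
  assumes bin: "\<And>t. t < n \<Longrightarrow> X t j \<le> 1 \<and> Y t j \<le> 1"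
    and col: "(\<Sum>t<n. X t j) = (\<Sum>t<n. Y t j)"
    and i: "i < n" "X i j \<noteq> Y i j"
  shows "\<exists>i'<n. X i' j \<noteq> Y i' j \<and> X i' j \<noteq> X i j"
proof (rule ccontr)
  assume "\<not> ?thesis"
  then have same: "\<And>t. t < n \<Longrightarrow> X t j \<noteq> Y t j \<Longrightarrow> X t j = X i j"
    by blast
  have "X i j \<le> 1" "Y i j \<le> 1"
    using bin i by auto
  then consider "X i j = 1" "Y i j = 0" | "X i j = 0" "Y i j = 1"
    using i by linarith
  then show False
  proof cases
    case 1
    have "(\<Sum>t<n. Y t j) < (\<Sum>t<n. X t j)"
    proof (rule sum_strict_mono_ex1)
      show "\<forall>t\<in>{..<n}. Y t j \<le> X t j"
        using same 1 bin by fastforce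
      show "\<exists>t\<in>{..<n}. Y t j < X t j"
        using i 1 by (intro bexI[of _ i]) auto
    qed simp
    with col show False by simp
  next
    case 2
    have "(\<Sum>t<n. X t j) < (\<Sum>t<n. Y t j)"
    proof (rule sum_strict_mono_ex1)
      show "\<forall>t\<in>{..<n}. X t j \<le> Y t j"
        using same 2 by fastforce
      show "\<exists>t\<in>{..<n}. X t j < Y t j"
        using i 2 by (intro bexI[of _ i]) auto
    qed simp
    with col show False by simp
  qed
qed

lemma even_card_obtains_other:
  assumes "finite A" "even (card {l \<in> A. P l})" "j \<in> A" "P j"
  obtains m where "m \<in> A" "m \<noteq> j" "P m"
proof -
  have "{l \<in> A. P l} \<noteq> {j}"
    using assms(2) by auto
  then show ?thesis
    using assms(3,4) that by blast
qed

text \<open>Rows \<open>X t\<close> and \<open>Y t\<close> are the level vectors of the \<open>t\<close>-th runs of two lists in the same fiber.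
  The conclusion provides two rows and two columns on which switching the levels, in \<open>X\<close> when
  \<open>X i k \<noteq> X i' k\<close> and in \<open>Y\<close> otherwise, strictly decreases the number of mismatches.\<close>

lemma exists_switchable_pair:
  fixes X Y :: "nat \<Rightarrow> 'c \<Rightarrow> nat"
  assumes fin: "finite L"
    and bin: "\<And>t l. t < n \<Longrightarrow> l \<in> L \<Longrightarrow> X t l \<le> 1 \<and> Y t l \<le> 1"
    and col: "\<And>l. l \<in> L \<Longrightarrow> (\<Sum>t<n. X t l) = (\<Sum>t<n. Y t l)"
    and even: "\<And>t. t < n \<Longrightarrow> even (card {l \<in> L. X t l \<noteq> Y t l})"
    and mismatch: "t0 < n" "j0 \<in> L" "X t0 j0 \<noteq> Y t0 j0"
  shows "\<exists>i i' j k. i < n \<and> i' < n \<and> j \<in> L \<and> k \<in> L \<and> j \<noteq> k \<and>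
    X i j \<noteq> Y i j \<and> X i' j \<noteq> Y i' j \<and> X i j \<noteq> X i' j \<and>
    (X i k \<noteq> X i' k \<or> Y i k \<noteq> Y i' k) \<and> \<not> (X i k = Y i k \<and> X i' k = Y i' k)"
proof -
  define good where "good i i' j \<longleftrightarrow> (\<exists>k\<in>L. k \<noteq> j \<and>
    (X i k \<noteq> X i' k \<or> Y i k \<noteq> Y i' k) \<and> \<not> (X i k = Y i k \<and> X i' k = Y i' k))" for i i' j
  have from_good: ?thesis if "good i i' j" "i < n" "i' < n" "j \<in> L"
    "X i j \<noteq> Y i j" "X i' j \<noteq> Y i' j" "X i j \<noteq> X i' j" for i i' j
    using that unfolding good_def by blast
  obtain i' where i': "i' < n" "X i' j0 \<noteq> Y i' j0" "X i' j0 \<noteq> X t0 j0"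
    using exists_opposite_mismatch[of n X j0 Y t0] bin col mismatch by blast
  show ?thesis
  proof (cases "good t0 i' j0")
    case True
    with i' mismatch show ?thesis by (intro from_good[of t0 i' j0]) auto
  next
    case False
    then have not_good: "\<And>k. k \<in> L \<Longrightarrow> k \<noteq> j0 \<Longrightarrow>
        (X t0 k = X i' k \<and> Y t0 k = Y i' k) \<or> (X t0 k = Y t0 k \<and> X i' k = Y i' k)"
      unfolding good_def by blast
    obtain m where m: "m \<in> L" "m \<noteq> j0" "X t0 m \<noteq> Y t0 m"
      using even_card_obtains_other[OF fin even[OF mismatch(1)] mismatch(2,3)] by blast
    then have same_m: "X i' m = X t0 m" "Y i' m = Y t0 m"
      using not_good[OF m(1,2)] by auto
    obtain i'' where i'': "i'' < n" "X i'' m \<noteq> Y i'' m" "X i'' m \<noteq> X t0 m"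
      using exists_opposite_mismatch[of n X m Y t0] bin col mismatch m by blast
    have "good t0 i'' m \<or> good i' i'' m"
    proof (rule ccontr)
      assume "\<not> ?thesis"
      then have "X i'' j0 = X t0 j0" "X i'' j0 = X i' j0"
        unfolding good_def using mismatch m i' by auto
      with i' show False by simp
    qed
    then show ?thesis
    proof
      assume "good t0 i'' m"
      with mismatch m i'' show ?thesis by (intro from_good[of t0 i'' m]) auto
    next
      assume "good i' i'' m"
      with i' m i'' same_m show ?thesis by (intro from_good[of i' i'' m]) auto
    qed
  qed
qed

lemma finite_nonneg_vecs_sum_eq: "finite {f. nonneg_vec p f \<and> (\<Sum>c\<in>cells p. f c) = N}"
proof (rule finite_subset)
  show "{f. nonneg_vec p f \<and> (\<Sum>c\<in>cells p. f c) = N} \<subseteq>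
      {f. \<forall>c. (c \<in> cells p \<longrightarrow> f c \<in> {0..N}) \<and> (c \<notin> cells p \<longrightarrow> f c = 0)}"
  proof safe
    fix f c
    assume f: "nonneg_vec p f"
    show "f c \<in> {0..(\<Sum>c\<in>cells p. f c)}" if "c \<in> cells p"
      using f that finite_cells by (auto intro: member_le_sum simp: nonneg_vec_def)
    show "f c = 0" if "c \<notin> cells p"
      using f that by (auto simp: nonneg_vec_def vec_def)
  qed
  show "finite {f. \<forall>c. (c \<in> cells p \<longrightarrow> f c \<in> {0..N}) \<and> (c \<notin> cells p \<longrightarrow> f c = 0)}"
    by (rule finite_set_of_finite_funs) (auto simp: finite_cells)
qed

lemma finite_fiber: "finite (fiber p b)"
proof (rule finite_subset)
  show "fiber p b \<subseteq> {f. nonneg_vec p f \<and> (\<Sum>c\<in>cells p. f c) = Mt p b 0}"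
    unfolding fiber_def by (auto simp flip: Mt_0)
qed (rule finite_nonneg_vecs_sum_eq)

lemma finite_deg2_fibers: "finite (deg2_fibers p)"
proof -
  have "deg2_fibers p = fiber p ` {b. nonneg_vec p b \<and> (\<Sum>c\<in>cells p. b c) = 2}"
    unfolding deg2_fibers_def by auto
  then show ?thesis
    using finite_nonneg_vecs_sum_eq by simp
qed

lemma fiber_eq_if_mem: "x \<in> fiber p b \<Longrightarrow> fiber p x = fiber p b"
  unfolding fiber_def by auto

lemma deg2_fiber_nonneg: "F \<in> deg2_fibers p \<Longrightarrow> x \<in> F \<Longrightarrow> 0 \<le> x c"
  unfolding deg2_fibers_def fiber_def nonneg_vec_def by auto

lemma fiber_translate:
  assumes "nonneg_vec p r" "w \<in> fiber p c" "r + c \<in> fiber p b"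
  shows "r + w \<in> fiber p b"
  using assms nonneg_vec_add[OF assms(1)] unfolding fiber_def by (auto simp: Mt_add)

lemma count_vec_mem_fiber:
  assumes "set_mset M \<subseteq> cells p" "set_mset N \<subseteq> cells p"
    and "\<And>j. j \<le> p \<Longrightarrow> (\<Sum>a\<in>#N. Mentry p a j) = (\<Sum>a\<in>#M. Mentry p a j)"
  shows "count_vec N \<in> fiber p (count_vec M)"
  using assms unfolding fiber_def by (simp add: nonneg_vec_count_vec Mt_count_vec)

lemma fiber_count_vec_in_deg2_fibers:
  assumes "set_mset M \<subseteq> cells p" "size M = 2"
  shows "fiber p (count_vec M) \<in> deg2_fibers p"
  using assms Mt_count_vec_0[OF assms(1)] nonneg_vec_count_vec[OF assms(1)]
  unfolding deg2_fibers_def by (auto simp: Mt_0)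

lemma fiber_lists_level_counts:
  assumes "set xs \<subseteq> cells p" "set ys \<subseteq> cells p"
    and "count_vec (mset xs) \<in> fiber p b" "count_vec (mset ys) \<in> fiber p b"
  shows "length xs = length ys"
    and "l \<in> {1..p} \<Longrightarrow> (\<Sum>t<length xs. level_bit p (xs ! t) l) = (\<Sum>t<length xs. level_bit p (ys ! t) l)"
proof -
  have Mt_eq: "(\<Sum>t<length xs. Mentry p (xs ! t) j) = (\<Sum>t<length ys. Mentry p (ys ! t) j)" if "j \<le> p" for j
    using assms that unfolding fiber_def by (auto simp: Mt_count_vec_mset)
  from Mt_eq[of 0] show len: "length xs = length ys"
    by (simp add: Mentry_def)
  assume l: "l \<in> {1..p}"
  have xs: "xs ! t \<in> cells p" if "t < length xs" for t
    using assms(1) that by auto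
  have ys: "ys ! t \<in> cells p" if "t < length ys" for t
    using assms(2) that by auto
  have "(\<Sum>t<length xs. Mentry p (xs ! t) l) = (\<Sum>t<length xs. 1 - 2 * int (level_bit p (xs ! t) l))"
    using l by (intro sum.cong) (auto simp: Mentry_eq_level_bit[OF xs])
  moreover have "(\<Sum>t<length ys. Mentry p (ys ! t) l) = (\<Sum>t<length xs. 1 - 2 * int (level_bit p (ys ! t) l))"
    using l len by (intro sum.cong) (auto simp: Mentry_eq_level_bit[OF ys])
  ultimately have "(\<Sum>t<length xs. 1 - 2 * int (level_bit p (xs ! t) l)) =
      (\<Sum>t<length xs. 1 - 2 * int (level_bit p (ys ! t) l))"
    using Mt_eq l by auto
  then have "int (\<Sum>t<length xs. level_bit p (xs ! t) l) = int (\<Sum>t<length xs. level_bit p (ys ! t) l)"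
    by (simp add: sum_subtractf sum_distrib_left[symmetric] of_nat_sum)
  then show "(\<Sum>t<length xs. level_bit p (xs ! t) l) = (\<Sum>t<length xs. level_bit p (ys ! t) l)"
    by (simp only: of_nat_eq_iff)
qed

lemma deg2_fiber_disjoint_supports:
  assumes F: "F \<in> deg2_fibers p" and xy: "x \<in> F" "y \<in> F" "x \<noteq> y"
  shows "x c = 0 \<or> y c = 0"
proof (rule ccontr)
  assume common: "\<not> ?thesis"
  obtain b where b: "F = fiber p b" "Mt p b 0 = 2"
    using F unfolding deg2_fibers_def by (auto simp: Mt_0)
  have pair: "\<exists>d. d \<in> cells p \<and> z = count_vec {#c, d#}" if "z \<in> F" "z c \<noteq> 0" for z
  proof -
    have "nonneg_vec p z"
      using that b unfolding fiber_def by auto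
    then obtain M where M: "set_mset M \<subseteq> cells p" "z = count_vec M"
      by (rule nonneg_vec_obtains_count_vec)
    have "size M = 2"
      using that b M Mt_count_vec_0[OF M(1)] unfolding fiber_def by auto
    moreover have "c \<in># M"
      using that M unfolding count_vec_def by (simp add: count_eq_zero_iff)
    ultimately have "size (M - {#c#}) = 1"
      by (simp add: size_Diff_singleton)
    then obtain d where "M - {#c#} = {#d#}"
      using size_1_singleton_mset by blast
    then have "M = {#c, d#}"
      using \<open>c \<in># M\<close> by (metis insert_DiffM)
    with M show ?thesis by auto
  qed
  obtain d where d: "d \<in> cells p" "x = count_vec {#c, d#}"
    using pair[of x] xy common by blast
  obtain d' where d': "d' \<in> cells p" "y = count_vec {#c, d'#}"
    using pair[of y] xy common by blast
  have c: "c \<in> cells p"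
    using xy(1) common b unfolding fiber_def nonneg_vec_def vec_def by auto
  have "Mentry p d j = Mentry p d' j" if "j \<le> p" for j
  proof -
    have "Mt p x j = Mt p y j"
      using xy b that unfolding fiber_def by auto
    then show ?thesis
      using c d d' by (simp add: Mt_count_vec)
  qed
  then have "d = d'"
    using cell_eq_if_Mentry_eq d(1) d'(1) by blast
  with d d' xy show False by simp
qed

lemma disjoint_nonneg_diff_cancel:
  fixes x y x' y' :: "'a \<Rightarrow> int"
  assumes "\<And>c. 0 \<le> x c \<and> 0 \<le> y c \<and> (x c = 0 \<or> y c = 0)"
    and "\<And>c. 0 \<le> x' c \<and> 0 \<le> y' c \<and> (x' c = 0 \<or> y' c = 0)"
    and "x - y = x' - y'"
  shows "x = x' \<and> y = y'"
proof -
  have "x c = x' c \<and> y c = y' c" for c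
    using assms(1,2)[of c] fun_cong[OF assms(3), of c] by auto
  then show ?thesis by auto
qed

lemma deg2_fiber_eq_fiber: "F \<in> deg2_fibers p \<Longrightarrow> x \<in> F \<Longrightarrow> F = fiber p x"
  unfolding deg2_fibers_def using fiber_eq_if_mem by blast

lemma deg2_fiber_diff_cancel:
  assumes "F \<in> deg2_fibers p" "u \<in> F" "v \<in> F" "u \<noteq> v"
    and "F' \<in> deg2_fibers p" "x \<in> F'" "y \<in> F'" "x \<noteq> y"
    and "v - u = x - y"
  shows "v = x \<and> u = y"
proof (rule disjoint_nonneg_diff_cancel[OF _ _ assms(9)])
  fix c
  show "0 \<le> v c \<and> 0 \<le> u c \<and> (v c = 0 \<or> u c = 0)"
    using deg2_fiber_nonneg[OF assms(1)] deg2_fiber_disjoint_supports[OF assms(1,3,2)] assms(2,3,4)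
    by metis
  show "0 \<le> x c \<and> 0 \<le> y c \<and> (x c = 0 \<or> y c = 0)"
    using deg2_fiber_nonneg[OF assms(5)] deg2_fiber_disjoint_supports[OF assms(5,6,7,8)] assms(6,7)
    by metis
qed

definition edges :: "'a :: minus set \<Rightarrow> 'a set \<Rightarrow> ('a \<times> 'a) set" where
  "edges F B = {(u, v). u \<in> F \<and> v \<in> F \<and> (v - u \<in> B \<or> u - v \<in> B)}"

lemma graph_connected_iff_edges:
  "graph_connected F B \<longleftrightarrow> (\<forall>x\<in>F. \<forall>y\<in>F. (x, y) \<in> (edges F B)\<^sup>*)"
  unfolding graph_connected_def edges_def by simp

lemma edges_rtrancl_sym: "(x, y) \<in> (edges F B)\<^sup>* \<Longrightarrow> (y, x) \<in> (edges F B)\<^sup>*"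
proof -
  have "(edges F B)\<inverse> = edges F B"
    unfolding edges_def by auto
  then show "(x, y) \<in> (edges F B)\<^sup>* \<Longrightarrow> (y, x) \<in> (edges F B)\<^sup>*"
    by (metis converseI rtrancl_converseI)
qed

lemma edges_rtrancl_mem: "(x, y) \<in> (edges F B)\<^sup>* \<Longrightarrow> x \<in> F \<Longrightarrow> y \<in> F"
  by (induction rule: rtrancl_induct) (auto simp: edges_def)

lemma edges_rtrancl_translate:
  fixes r :: "'a :: ab_group_add"
  assumes "(x, y) \<in> (edges F B)\<^sup>*" "\<And>w. w \<in> F \<Longrightarrow> r + w \<in> G" "B \<subseteq> B'"
  shows "(r + x, r + y) \<in> (edges G B')\<^sup>*"
  using assms(1)
proof (induction rule: rtrancl_induct)
  case (step y z)
  then have "(r + y, r + z) \<in> edges G B'"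
    using assms(2,3) unfolding edges_def by auto
  with step.IH show ?case by simp
qed simp

text \<open>A connected graph has at most one vertex more than edges: contracting an edge \<open>(a, b)\<close> onto \<open>a\<close>
  removes one edge and at most one vertex.\<close>

lemma card_le_Suc_card_if_connected:
  fixes L :: "('a \<times> 'a) set"
  assumes "finite L" "finite V" "x \<in> V" "\<forall>y\<in>V. (x, y) \<in> (L \<union> L\<inverse>)\<^sup>*"
  shows "card V \<le> card L + 1"
  using assms
proof (induction "card L" arbitrary: L V x rule: less_induct)
  case less
  show ?case
  proof (cases "L = {}")
    case True
    then have "V \<subseteq> {x}"
      using less.prems(4) by auto
    then show ?thesis
      using card_mono[of "{x}" V] by simp
  next
    case False
    then obtain a b where ab: "(a, b) \<in> L" by auto
    define f where "f z = (if z = b then a else z)" for z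
    define L' where "L' = (\<lambda>(u, w). (f u, f w)) ` (L - {(a, b)})"
    have "card L' \<le> card (L - {(a, b)})"
      unfolding L'_def using card_image_le less.prems(1) by blast
    then have card_L': "card L' < card L"
      using card_Diff1_less[OF less.prems(1) ab] by linarith
    have contract: "(f y, f z) \<in> (L' \<union> L'\<inverse>)\<^sup>*" if "(y, z) \<in> L \<union> L\<inverse>" for y z
    proof (cases "(y, z) = (a, b) \<or> (z, y) = (a, b)")
      case True
      then show ?thesis unfolding f_def by auto
    next
      case False
      with that have "(f y, f z) \<in> L' \<union> L'\<inverse>"
        unfolding L'_def by force
      then show ?thesis by blast
    qed
    have "(f x, f y) \<in> (L' \<union> L'\<inverse>)\<^sup>*" if "y \<in> V" for y
    proof -
      have "(x, y) \<in> (L \<union> L\<inverse>)\<^sup>*"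
        using less.prems(4) that by blast
      then show ?thesis
      proof (induction rule: rtrancl_induct)
        case (step y z)
        with contract[of y z] show ?case by (meson rtrancl_trans)
      qed simp
    qed
    then have "card (f ` V) \<le> card L' + 1"
      using less.hyps[OF card_L', of "f ` V" "f x"] less.prems(1,2,3)
      unfolding L'_def by auto
    moreover have "card V \<le> card (f ` V) + 1"
    proof -
      have "V \<subseteq> insert b (f ` V)"
      proof
        fix v assume "v \<in> V"
        then show "v \<in> insert b (f ` V)"
          unfolding f_def by (cases "v = b") (auto intro: rev_image_eqI)
      qed
      then have "card V \<le> card (insert b (f ` V))"
        using less.prems(2) by (intro card_mono) auto
      also have "\<dots> \<le> card (f ` V) + 1"
        using less.prems(2) by (simp add: card_insert_if)
      finally show ?thesis .
    qed
    ultimately show ?thesis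
      using card_L' by linarith
  qed
qed

section \<open>The moves of the degree 2 fibers form a Markov basis\<close>

lemma nonneg_vec_obtains_list:
  assumes "nonneg_vec p x"
  obtains xs where "set xs \<subseteq> cells p" "x = count_vec (mset xs)"
proof -
  obtain M where "set_mset M \<subseteq> cells p" "x = count_vec M"
    using assms by (rule nonneg_vec_obtains_count_vec)
  then show ?thesis
    using that ex_mset[of M] by auto
qed

lemma count_mset_eq_card: "count (mset xs) x = card {t. t < length xs \<and> xs ! t = x}"
  by (metis (mono_tags, lifting) length_replicate replicate_count_mset_eq_filter_eq
      length_filter_conv_card Collect_cong)

lemma mset_update_two:
  assumes "i < length xs" "i' < length xs" "i \<noteq> i'"
  obtains R where "mset xs = R + {#xs ! i, xs ! i'#}" "mset (xs[i := a, i' := c]) = R + {#a, c#}"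
proof
  have "2 \<le> count (mset xs) (xs ! i')" if "xs ! i = xs ! i'"
    using that assms card_mono[of "{t. t < length xs \<and> xs ! t = xs ! i'}" "{i, i'}"]
    by (auto simp: count_mset_eq_card)
  then have sub: "{#xs ! i, xs ! i'#} \<subseteq># mset xs"
    using assms by (auto simp: subseteq_mset_def)
  show "mset xs = (mset xs - {#xs ! i, xs ! i'#}) + {#xs ! i, xs ! i'#}"
    using subset_mset.diff_add[OF sub] by simp
  have "xs ! i' \<in># mset xs - {#xs ! i#}"
    using sub by (simp add: insert_subset_eq_iff)
  then show "mset (xs[i := a, i' := c]) = (mset xs - {#xs ! i, xs ! i'#}) + {#a, c#}"
    using assms by (simp add: mset_update add_mset_commute)
qed

definition pairing_distance :: "nat \<Rightarrow> nat list list \<Rightarrow> nat list list \<Rightarrow> nat" where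
  "pairing_distance p xs ys = (\<Sum>t<length xs. hamming p (xs ! t) (ys ! t))"

lemma pairing_distance_sym:
  "length xs = length ys \<Longrightarrow> pairing_distance p xs ys = pairing_distance p ys xs"
  unfolding pairing_distance_def by (simp add: hamming_sym)

lemma sum_lessThan_less_two:
  fixes f g :: "nat \<Rightarrow> nat"
  assumes "i < n" "i' < n" "i \<noteq> i'"
    and "\<And>t. t < n \<Longrightarrow> t \<noteq> i \<Longrightarrow> t \<noteq> i' \<Longrightarrow> f t = g t"
    and "f i + f i' < g i + g i'"
  shows "(\<Sum>t<n. f t) < (\<Sum>t<n. g t)"
proof -
  have "(\<Sum>t\<in>{..<n} - {i, i'}. f t) = (\<Sum>t\<in>{..<n} - {i, i'}. g t)"
    using assms by (intro sum.cong) auto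
  then show ?thesis
    using assms sum_remove_two[of "{..<n}" i i' f] sum_remove_two[of "{..<n}" i i' g] by simp
qed

locale deg2_fiber_moves =
  fixes p :: nat and BF :: "(nat list \<Rightarrow> int) set \<Rightarrow> (nat list \<Rightarrow> int) set"
  assumes BF: "\<And>F. F \<in> deg2_fibers p \<Longrightarrow> card F > 1 \<Longrightarrow>
      card (BF F) = card F - 1 \<and> (\<forall>z\<in>BF F. \<exists>x\<in>F. \<exists>y\<in>F. z = x - y) \<and> graph_connected F (BF F)"
begin

definition basis :: "(nat list \<Rightarrow> int) set" where
  "basis = \<Union>{BF F | F. F \<in> deg2_fibers p \<and> card F > 1}"

lemma finite_BF: "F \<in> deg2_fibers p \<Longrightarrow> card F > 1 \<Longrightarrow> finite (BF F)"
  using BF by (intro card_ge_0_finite) fastforce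

lemma finite_basis: "finite basis"
proof -
  have "basis = \<Union> (BF ` {F \<in> deg2_fibers p. card F > 1})"
    unfolding basis_def by auto
  then show ?thesis
    using finite_deg2_fibers finite_BF by auto
qed

lemma is_move_basis: "z \<in> basis \<Longrightarrow> is_move p z"
proof -
  assume "z \<in> basis"
  then obtain F where F: "F \<in> deg2_fibers p" "card F > 1" "z \<in> BF F"
    unfolding basis_def by auto
  then obtain x y where xy: "x \<in> F" "y \<in> F" "z = x - y"
    using BF by blast
  obtain b where "F = fiber p b"
    using F(1) unfolding deg2_fibers_def by auto
  with xy show "is_move p z"
    unfolding is_move_def fiber_def by (auto simp: nonneg_vec_def vec_def Mt_diff)
qed

text \<open>Replacing two runs \<open>u, v\<close> by \<open>a, c\<close> with the same column sums is a walk in the graph of \<open>BF\<close> on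
  the degree 2 fiber of \<open>u + v\<close>, translated by the remaining runs.\<close>

lemma deg2_replacement_path:
  assumes R: "set_mset R \<subseteq> cells p"
    and cells: "u \<in> cells p" "v \<in> cells p" "a \<in> cells p" "c \<in> cells p"
    and fib: "count_vec (R + {#u, v#}) \<in> fiber p b"
    and M: "\<And>j. j \<le> p \<Longrightarrow> Mentry p a j + Mentry p c j = Mentry p u j + Mentry p v j"
  shows "(count_vec (R + {#u, v#}), count_vec (R + {#a, c#})) \<in> (edges (fiber p b) basis)\<^sup>*"
proof -
  define F where "F = fiber p (count_vec {#u, v#})"
  have F: "F \<in> deg2_fibers p"
    unfolding F_def using cells by (intro fiber_count_vec_in_deg2_fibers) auto
  have uv: "count_vec {#u, v#} \<in> F" and ac: "count_vec {#a, c#} \<in> F"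
    unfolding F_def using cells M by (auto intro!: count_vec_mem_fiber)
  have "count_vec R + count_vec {#u, v#} \<in> fiber p b"
    using fib by (simp only: count_vec_union)
  then have translate: "count_vec R + w \<in> fiber p b" if "w \<in> F" for w
    using fiber_translate[OF nonneg_vec_count_vec[OF R] that[unfolded F_def]] by blast
  have "(count_vec R + count_vec {#u, v#}, count_vec R + count_vec {#a, c#}) \<in> (edges (fiber p b) basis)\<^sup>*"
  proof (cases "card F > 1")
    case True
    then have "graph_connected F (BF F)" "BF F \<subseteq> basis"
      using BF[OF F] F unfolding basis_def by blast+
    with uv ac translate show ?thesis
      unfolding graph_connected_iff_edges by (blast intro: edges_rtrancl_translate)
  next
    case False
    then have "count_vec {#u, v#} = count_vec {#a, c#}"
      using uv ac card_le_Suc0_iff_eq[OF finite_fiber[of p "count_vec {#u, v#}"]]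
      unfolding F_def by auto
    then show ?thesis by simp
  qed
  then show ?thesis
    by (simp only: count_vec_union)
qed

lemma switch_step:
  assumes xs: "set xs \<subseteq> cells p" and ys: "set ys \<subseteq> cells p" "length ys = length xs"
    and fib: "count_vec (mset xs) \<in> fiber p b"
    and i: "i < length xs" "i' < length xs"
    and jk: "j \<in> {1..p}" "k \<in> {1..p}" "j \<noteq> k"
    and j: "level_bit p (xs ! i) j \<noteq> level_bit p (ys ! i) j"
      "level_bit p (xs ! i') j \<noteq> level_bit p (ys ! i') j"
      "level_bit p (xs ! i) j \<noteq> level_bit p (xs ! i') j"
    and k: "level_bit p (xs ! i) k \<noteq> level_bit p (xs ! i') k"
      "\<not> (level_bit p (xs ! i) k = level_bit p (ys ! i) k \<and> level_bit p (xs ! i') k = level_bit p (ys ! i') k)"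
  obtains xs' where "set xs' \<subseteq> cells p" "length xs' = length xs"
    "(count_vec (mset xs), count_vec (mset xs')) \<in> (edges (fiber p b) basis)\<^sup>*"
    "pairing_distance p xs' ys < pairing_distance p xs ys"
proof
  define u where "u = xs ! i"
  define v where "v = xs ! i'"
  define xs' where "xs' = xs[i := switch_levels p u j k, i' := switch_levels p v j k]"
  have ii: "i \<noteq> i'"
    using j(3) by auto
  have uv: "u \<in> cells p" "v \<in> cells p"
    using xs i unfolding u_def v_def by auto
  then have cells: "u \<in> cells p" "v \<in> cells p" "switch_levels p u j k \<in> cells p" "switch_levels p v j k \<in> cells p"
    using jk switch_levels_in_cells[of u p j k] switch_levels_in_cells[of v p j k] by auto
  show "set xs' \<subseteq> cells p"
    using xs cells set_update_subset_insert[of xs i "switch_levels p u j k"]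
      set_update_subset_insert[of "xs[i := switch_levels p u j k]" i' "switch_levels p v j k"]
    unfolding xs'_def by auto
  show len: "length xs' = length xs"
    unfolding xs'_def by simp
  obtain R where R: "mset xs = R + {#u, v#}" "mset xs' = R + {#switch_levels p u j k, switch_levels p v j k#}"
    using mset_update_two[OF i ii] unfolding xs'_def u_def v_def by blast
  have R_cells: "set_mset R \<subseteq> cells p"
    using xs arg_cong[OF R(1), of set_mset] by auto
  have fib': "count_vec (R + {#u, v#}) \<in> fiber p b"
    using fib unfolding R(1) .
  have M: "Mentry p (switch_levels p u j k) l + Mentry p (switch_levels p v j k) l =
      Mentry p u l + Mentry p v l" if "l \<le> p" for l
    using Mentry_switch_levels[OF uv jk _ _ that] j(3) k(1) unfolding u_def v_def by simp
  show "(count_vec (mset xs), count_vec (mset xs')) \<in> (edges (fiber p b) basis)\<^sup>*"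
    unfolding R by (rule deg2_replacement_path[OF R_cells cells fib' M])
  have ys_cells: "ys ! i \<in> cells p" "ys ! i' \<in> cells p"
    using ys i by auto
  show "pairing_distance p xs' ys < pairing_distance p xs ys"
    unfolding pairing_distance_def len
  proof (rule sum_lessThan_less_two[OF i ii])
    show "hamming p (xs' ! t) (ys ! t) = hamming p (xs ! t) (ys ! t)" if "t \<noteq> i" "t \<noteq> i'" for t
      using that unfolding xs'_def by simp
    show "hamming p (xs' ! i) (ys ! i) + hamming p (xs' ! i') (ys ! i') <
        hamming p (xs ! i) (ys ! i) + hamming p (xs ! i') (ys ! i')"
      using hamming_switch_levels_less[OF cells(1,2) ys_cells jk] i ii j k
      unfolding xs'_def u_def v_def by simp
  qed
qed

lemma fiber_lists_connected:
  assumes "set xs \<subseteq> cells p" "set ys \<subseteq> cells p"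
    and "count_vec (mset xs) \<in> fiber p b" "count_vec (mset ys) \<in> fiber p b"
  shows "(count_vec (mset xs), count_vec (mset ys)) \<in> (edges (fiber p b) basis)\<^sup>*"
  using assms
proof (induction "pairing_distance p xs ys" arbitrary: xs ys rule: less_induct)
  case less
  define n where "n = length xs"
  have len: "length ys = n"
    using fiber_lists_level_counts(1)[OF less.prems] unfolding n_def by simp
  have xs: "xs ! t \<in> cells p" and ys: "ys ! t \<in> cells p" if "t < n" for t
    using less.prems(1,2) that len unfolding n_def by auto
  show ?case
  proof (cases "\<forall>t<n. xs ! t = ys ! t")
    case True
    have "xs = ys"
      using True len by (intro nth_equalityI) (auto simp: n_def)
    then show ?thesis by simp
  next
    case False
    then obtain t0 where t0: "t0 < n" "xs ! t0 \<noteq> ys ! t0"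
      by blast
    then obtain j0 where j0: "j0 \<in> {1..p}" "level_bit p (xs ! t0) j0 \<noteq> level_bit p (ys ! t0) j0"
      using cell_eq_if_level_bits_eq[OF xs ys] by blast
    have bin: "level_bit p (xs ! t) l \<le> 1 \<and> level_bit p (ys ! t) l \<le> 1"
      if "t < n" "l \<in> {1..p}" for t l
      using that xs ys level_bit_le_1 by auto
    have col: "(\<Sum>t<n. level_bit p (xs ! t) l) = (\<Sum>t<n. level_bit p (ys ! t) l)"
      if "l \<in> {1..p}" for l
      using fiber_lists_level_counts(2)[OF less.prems that] unfolding n_def .
    have even: "even (card {l \<in> {1..p}. level_bit p (xs ! t) l \<noteq> level_bit p (ys ! t) l})"
      if "t < n" for t
      using even_hamming[OF xs ys, OF that that] unfolding hamming_def .
    obtain i i' j k where i: "i < n" "i' < n" and jk: "j \<in> {1..p}" "k \<in> {1..p}" "j \<noteq> k"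
      and j: "level_bit p (xs ! i) j \<noteq> level_bit p (ys ! i) j"
        "level_bit p (xs ! i') j \<noteq> level_bit p (ys ! i') j"
        "level_bit p (xs ! i) j \<noteq> level_bit p (xs ! i') j"
      and k: "level_bit p (xs ! i) k \<noteq> level_bit p (xs ! i') k \<or>
          level_bit p (ys ! i) k \<noteq> level_bit p (ys ! i') k"
        "\<not> (level_bit p (xs ! i) k = level_bit p (ys ! i) k \<and>
          level_bit p (xs ! i') k = level_bit p (ys ! i') k)"
      using exists_switchable_pair[OF finite_atLeastAtMost bin col even t0(1) j0] by blast
    show ?thesis
    proof (cases "level_bit p (xs ! i) k \<noteq> level_bit p (xs ! i') k")
      case True
      have i_xs: "i < length xs" "i' < length xs"
        using i unfolding n_def by auto
      obtain xs' where xs': "set xs' \<subseteq> cells p" "length xs' = length xs"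
        "(count_vec (mset xs), count_vec (mset xs')) \<in> (edges (fiber p b) basis)\<^sup>*"
        "pairing_distance p xs' ys < pairing_distance p xs ys"
        using switch_step[OF less.prems(1,2) _ less.prems(3) i_xs jk j True k(2)] len
        unfolding n_def by blast
      have "count_vec (mset xs') \<in> fiber p b"
        using edges_rtrancl_mem[OF xs'(3) less.prems(3)] .
      then have "(count_vec (mset xs'), count_vec (mset ys)) \<in> (edges (fiber p b) basis)\<^sup>*"
        using less.hyps[OF xs'(4) xs'(1) less.prems(2) _ less.prems(4)] by blast
      with xs'(3) show ?thesis
        by (rule rtrancl_trans)
    next
      case False
      have i_ys: "i < length ys" "i' < length ys"
        using i len by auto
      have len_xs: "length xs = length ys"
        using len unfolding n_def by simp
      have "level_bit p (xs ! i) j \<le> 1" "level_bit p (xs ! i') j \<le> 1"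
        "level_bit p (ys ! i) j \<le> 1" "level_bit p (ys ! i') j \<le> 1"
        using xs ys i jk level_bit_le_1 by auto
      then have j_ys: "level_bit p (ys ! i) j \<noteq> level_bit p (xs ! i) j"
        "level_bit p (ys ! i') j \<noteq> level_bit p (xs ! i') j"
        "level_bit p (ys ! i) j \<noteq> level_bit p (ys ! i') j"
        using j by linarith+
      have k_ys: "level_bit p (ys ! i) k \<noteq> level_bit p (ys ! i') k"
        "\<not> (level_bit p (ys ! i) k = level_bit p (xs ! i) k \<and>
          level_bit p (ys ! i') k = level_bit p (xs ! i') k)"
        using False k by auto
      obtain ys' where ys': "set ys' \<subseteq> cells p" "length ys' = length ys"
        "(count_vec (mset ys), count_vec (mset ys')) \<in> (edges (fiber p b) basis)\<^sup>*"
        "pairing_distance p ys' xs < pairing_distance p ys xs"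
        using switch_step[OF less.prems(2,1) len_xs less.prems(4) i_ys jk j_ys k_ys] by blast
      have "count_vec (mset ys') \<in> fiber p b"
        using edges_rtrancl_mem[OF ys'(3) less.prems(4)] .
      moreover have "pairing_distance p xs ys' < pairing_distance p xs ys"
        using ys'(4) pairing_distance_sym[of xs ys' p] pairing_distance_sym[of xs ys p] ys'(2) len
        unfolding n_def by simp
      ultimately have "(count_vec (mset xs), count_vec (mset ys')) \<in> (edges (fiber p b) basis)\<^sup>*"
        using less.hyps[OF _ less.prems(1) ys'(1) less.prems(3)] by blast
      then show ?thesis
        using edges_rtrancl_sym[OF ys'(3)] by (rule rtrancl_trans)
    qed
  qed
qed

lemma markov_basis: "markov_basis p basis"
  unfolding markov_basis_def
proof (intro conjI allI impI ballI)
  show "finite basis" by (rule finite_basis)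
  show "is_move p z" if "z \<in> basis" for z
    using that by (rule is_move_basis)
  fix b assume "nonneg_vec p b"
  show "graph_connected (fiber p b) basis"
    unfolding graph_connected_iff_edges
  proof (intro ballI)
    fix x y assume x: "x \<in> fiber p b" and y: "y \<in> fiber p b"
    obtain xs where xs: "set xs \<subseteq> cells p" "x = count_vec (mset xs)"
      using x nonneg_vec_obtains_list unfolding fiber_def by blast
    obtain ys where ys: "set ys \<subseteq> cells p" "y = count_vec (mset ys)"
      using y nonneg_vec_obtains_list unfolding fiber_def by blast
    show "(x, y) \<in> (edges (fiber p b) basis)\<^sup>*"
      using fiber_lists_connected[OF xs(1) ys(1)] x y xs(2) ys(2) by simp
  qed
qed

section \<open>Minimality\<close>

text \<open>By the disjointness of supports, a move of the basis joining two vertices of a degree 2 fiber \<open>F\<close>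
  determines both vertices, so it can only come from \<open>BF F\<close>.\<close>

lemma basis_move_in_BF:
  assumes F: "F \<in> deg2_fibers p" and uv: "u \<in> F" "v \<in> F" "u \<noteq> v" and "v - u \<in> basis"
  shows "v - u \<in> BF F"
proof -
  obtain F' where F': "F' \<in> deg2_fibers p" "card F' > 1" "v - u \<in> BF F'"
    using assms(5) unfolding basis_def by auto
  then obtain x y where xy: "x \<in> F'" "y \<in> F'" "v - u = x - y"
    using BF by blast
  have "x \<noteq> y"
    using xy uv by auto
  then have "v = x"
    using deg2_fiber_diff_cancel[OF F uv F' (1) xy(1,2)] xy(3) by blast
  then have "F' = F"
    using deg2_fiber_eq_fiber[OF F' (1) xy(1)] deg2_fiber_eq_fiber[OF F uv(2)] by simp
  with F' show ?thesis by simp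
qed

lemma basis_minimal:
  assumes "B' \<subset> basis"
  shows "\<not> markov_basis p B'"
proof
  assume markov: "markov_basis p B'"
  obtain z where z: "z \<in> basis" "z \<notin> B'"
    using assms by blast
  then obtain F where F: "F \<in> deg2_fibers p" "card F > 1" "z \<in> BF F"
    unfolding basis_def by auto
  have connected: "graph_connected F B'"
    using markov F(1) unfolding markov_basis_def deg2_fibers_def by auto
  have finite_F: "finite F"
    using F(1) finite_fiber unfolding deg2_fibers_def by auto
  define L where "L = {(u, v). u \<in> F \<and> v \<in> F \<and> u \<noteq> v \<and> v - u \<in> BF F - {z}}"
  have "inj_on (\<lambda>e. snd e - fst e) L"
  proof (rule inj_onI)
    fix e e' assume "e \<in> L" "e' \<in> L" "snd e - fst e = snd e' - fst e'"
    then show "e = e'"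
      using deg2_fiber_diff_cancel[OF F(1) _ _ _ F(1), of "fst e" "snd e" "snd e'" "fst e'"]
      unfolding L_def by (auto simp: prod_eq_iff)
  qed
  moreover have "(\<lambda>e. snd e - fst e) ` L \<subseteq> BF F - {z}"
    unfolding L_def by auto
  ultimately have "card L \<le> card (BF F - {z})"
    using finite_BF[OF F(1,2)] by (intro card_inj_on_le) auto
  also have "\<dots> = card F - 2"
    using BF[OF F(1,2)] finite_BF[OF F(1,2)] F(3) by simp
  finally have card_L: "card L \<le> card F - 2" .
  have in_L: "(u, v) \<in> L" if "u \<in> F" "v \<in> F" "u \<noteq> v" "v - u \<in> B'" for u v
  proof -
    have "v - u \<in> BF F"
      using that assms basis_move_in_BF[OF F(1) that(1-3)] by blast
    moreover have "v - u \<noteq> z"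
      using that(4) z(2) by blast
    ultimately show ?thesis
      using that unfolding L_def by blast
  qed
  have "edges F B' \<subseteq> (L \<union> L\<inverse>)\<^sup>="
  proof
    fix e assume "e \<in> edges F B'"
    then obtain u v where e: "e = (u, v)" "u \<in> F" "v \<in> F" "v - u \<in> B' \<or> u - v \<in> B'"
      unfolding edges_def by auto
    then show "e \<in> (L \<union> L\<inverse>)\<^sup>="
      using in_L[of u v] in_L[of v u] by (cases "u = v") auto
  qed
  then have "(edges F B')\<^sup>* \<subseteq> (L \<union> L\<inverse>)\<^sup>*"
    by (metis rtrancl_mono rtrancl_reflcl)
  moreover obtain x where x: "x \<in> F"
    using F(2) by fastforce
  ultimately have reach: "\<forall>y\<in>F. (x, y) \<in> (L \<union> L\<inverse>)\<^sup>*"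
    using connected unfolding graph_connected_iff_edges by blast
  have "finite L"
  proof (rule finite_subset)
    show "L \<subseteq> F \<times> F"
      unfolding L_def by auto
  qed (use finite_F in simp)
  then have "card F \<le> card L + 1"
    using card_le_Suc_card_if_connected[OF _ finite_F x reach] by blast
  with card_L F(2) show False
    by linarith
qed

end

theorem corollary1:
  fixes p :: nat and BF :: "(nat list \<Rightarrow> int) set \<Rightarrow> (nat list \<Rightarrow> int) set"
  assumes "p \<ge> 2"
    and "\<And>F. F \<in> deg2_fibers p \<Longrightarrow> card F > 1 \<Longrightarrow>
           card (BF F) = card F - 1 \<and>
           (\<forall>z\<in>BF F. \<exists>x\<in>F. \<exists>y\<in>F. z = x - y) \<and>
           graph_connected F (BF F)"
  shows "minimal_markov_basis p (\<Union>{BF F | F. F \<in> deg2_fibers p \<and> card F > 1})"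
proof -
  \<comment> \<open>The argument works for every \<open>p\<close>.\<close>
  interpret deg2_fiber_moves p BF
    using assms(2) by unfold_locales
  show ?thesis
    using markov_basis basis_minimal unfolding minimal_markov_basis_def basis_def by blast
qed

end
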